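(* Let $\lambda=(\lambda_m)_{m\in\mathbb{Z}}$ be a sequence of real numbers in $[0,1)$. Then there exist an entire function $P_\lambda:\mathbb{C}\to\mathbb{C}$ vanishing at every point of the set $\{n+\lambda_m+im: m,n\in\mathbb{Z}\}$ and a constant $c>0$ such that $|P_\lambda(z)|\le e^{c|z|^2}$ for all $z\in\mathbb{C}$. *)

theory Defs
  imports "HOL-Analysis.Analysis"
begin

end

theory Submission
  imports Defs "HOL-Complex_Analysis.Complex_Analysis"
begin

(* For real mu and k :: nat the entire function w |-> 1 - exp (2 pi i (w - mu + i k)) is
   1-periodic and vanishes on the row mu - i k + Z; near any point it differs from 1 by
   O(exp (-2 pi k)), so the product over k of these factors (with shifts mu_k) converges
   locally uniformly to an entire function vanishing on all rows mu_k - i k + Z.  Its modulus is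
   at most prod_k (1 + exp (2 pi (-Im w - k))): the roughly 2 |Im w| factors with small k are
   each at most exp (1 + 2 pi |Im w|), the others are 1 + O(2^-k), which gives a bound
   exp (O ((Im w)^2 + 1)).  One such product in z covers the lattice rows with m <= 0, one in
   i - z the rows with m >= 1. *)

lemma convergent_prod_one_minus:
  fixes f :: "nat \<Rightarrow> 'a :: {real_normed_div_algebra, banach, comm_ring_1}"
  assumes "summable (\<lambda>k. norm (f k))"
  shows "convergent_prod (\<lambda>k. 1 - f k)"
  using assms
  by (intro abs_convergent_prod_imp_convergent_prod summable_imp_abs_convergent_prod) simp

lemma holomorphic_on_prodinf_one_minus:
  fixes f :: "nat \<Rightarrow> complex \<Rightarrow> complex"
  assumes holo: "\<And>k. f k holomorphic_on UNIV"
    and bound: "\<And>R. \<exists>M. summable M \<and> (\<forall>k. \<forall>z\<in>cball 0 R. norm (f k z) \<le> M k)"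
  shows "(\<lambda>z. \<Prod>k. 1 - f k z) holomorphic_on UNIV"
proof (rule holomorphic_uniform_sequence)
  define P where "P N z = (\<Prod>k<N. 1 - f k z)" for N z
  show "P N holomorphic_on UNIV" for N
    unfolding P_def by (intro holomorphic_intros holo)
  have ulim: "uniform_limit (cball 0 R) P (\<lambda>z. \<Prod>k. 1 - f k z) sequentially" for R
  proof -
    obtain M where M: "summable M" "\<And>k z. z \<in> cball 0 R \<Longrightarrow> norm (f k z) \<le> M k"
      using bound[of R] by blast
    have "uniformly_convergent_on (cball 0 R) P"
      unfolding P_def
    proof (rule uniformly_convergent_on_prod')
      show "uniformly_convergent_on (cball 0 R) (\<lambda>N z. \<Sum>k<N. norm ((1 - f k z) - 1))"
        by (rule Weierstrass_m_test'[OF _ M(1)]) (use M(2) in auto)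
      show "continuous_on (cball 0 R) (\<lambda>z. 1 - f k z)" for k
        using holomorphic_on_subset[OF holo[of k], of "cball 0 R"]
        by (intro continuous_intros holomorphic_on_imp_continuous_on) auto
    qed auto
    moreover have lim: "lim (\<lambda>N. P N z) = (\<Prod>k. 1 - f k z)" if "z \<in> cball 0 R" for z
    proof (rule limI)
      have "summable (\<lambda>k. norm (f k z))"
        using M that by (intro summable_comparison_test[OF _ M(1)]) auto
      then show "(\<lambda>N. P N z) \<longlonglongrightarrow> (\<Prod>k. 1 - f k z)"
        unfolding P_def LIMSEQ_lessThan_iff_atMost
        by (intro convergent_prod_LIMSEQ convergent_prod_one_minus)
    qed
    ultimately show ?thesis
      unfolding uniformly_convergent_uniform_limit_iff
      by (subst (asm) uniform_limit_cong') (simp_all add: lim)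
  qed
  show "\<exists>d>0. cball z d \<subseteq> UNIV \<and> uniform_limit (cball z d) P (\<lambda>z. \<Prod>k. 1 - f k z) sequentially"
    for z
  proof (intro exI conjI)
    show "uniform_limit (cball z 1) P (\<lambda>z. \<Prod>k. 1 - f k z) sequentially"
      by (rule uniform_limit_on_subset[OF ulim[of "norm z + 1"]])
        (simp add: cball_subset_cball_iff)
  qed auto
qed auto

lemma exp_neg_pi_le_half: "exp (- pi) \<le> 1 / 2"
proof -
  have "2 \<le> exp pi"
    using exp_ge_add_one_self[of pi] pi_gt3 by linarith
  then show ?thesis
    by (simp add: exp_minus field_simps)
qed

lemma one_plus_exp_le_exp_one_plus:
  fixes x :: real
  assumes "0 \<le> x"
  shows "1 + exp x \<le> exp (1 + x)"
proof -
  have "2 \<le> exp (1::real)"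
    using exp_ge_add_one_self[of 1] by simp
  moreover have "1 \<le> exp x"
    using assms by simp
  ultimately have "2 * exp x \<le> exp 1 * exp x"
    by (intro mult_right_mono) auto
  with \<open>1 \<le> exp x\<close> have "1 + exp x \<le> exp 1 * exp x"
    by linarith
  then show ?thesis
    by (simp add: exp_add)
qed

lemma one_plus_exp_two_pi_le:
  fixes t :: real
  shows "1 + exp (2 * pi * (t - real k))
           \<le> exp ((if real k < 2 * \<bar>t\<bar> then 1 + 2 * pi * \<bar>t\<bar> else 0) + (1 / 2) ^ k)"
proof (cases "real k < 2 * \<bar>t\<bar>")
  case True
  have "1 + exp (2 * pi * (t - real k)) \<le> 1 + exp (2 * pi * \<bar>t\<bar>)"
    by (simp add: mult_left_mono)
  also have "\<dots> \<le> exp (1 + 2 * pi * \<bar>t\<bar>)"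
    by (rule one_plus_exp_le_exp_one_plus) simp
  finally show ?thesis
    using True by (simp add: order_trans)
next
  case False
  have "pi * (2 * t) \<le> pi * real k"
    using False by (intro mult_left_mono) auto
  then have "exp (2 * pi * (t - real k)) \<le> exp (- pi) ^ k"
    by (simp add: exp_of_nat_mult[symmetric] algebra_simps)
  also have "\<dots> \<le> (1 / 2) ^ k"
    using exp_neg_pi_le_half by (simp add: power_mono)
  finally have small: "exp (2 * pi * (t - real k)) \<le> (1 / 2) ^ k" .
  have "1 + exp (2 * pi * (t - real k)) \<le> exp (exp (2 * pi * (t - real k)))"
    by (rule exp_ge_add_one_self)
  also have "\<dots> \<le> exp ((1 / 2) ^ k)"
    using small by simp
  finally show ?thesis
    using False by simp
qed

lemma prod_one_plus_exp_two_pi_le: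
  fixes t :: real
  shows "(\<Prod>k<K. 1 + exp (2 * pi * (t - real k))) \<le> exp (20 * (t\<^sup>2 + 1))"
proof -
  define a where "a = \<bar>t\<bar>"
  define c where "c = 1 + 2 * pi * a"
  define h where "h k = (if real k < 2 * a then c else 0)" for k :: nat
  have "a \<ge> 0" "c \<ge> 0"
    by (simp_all add: a_def c_def)
  have "(\<Prod>k<K. 1 + exp (2 * pi * (t - real k))) \<le> (\<Prod>k<K. exp (h k + (1 / 2) ^ k))"
    using one_plus_exp_two_pi_le unfolding h_def c_def a_def
    by (intro prod_mono) (simp add: add_nonneg_nonneg)
  also have "\<dots> = exp (\<Sum>k<K. h k + (1 / 2) ^ k)"
    by (simp add: exp_sum)
  also have "\<dots> = exp ((\<Sum>k<K. h k) + (\<Sum>k<K. (1 / 2) ^ k))"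
    by (simp add: sum.distrib)
  also have "\<dots> \<le> exp ((2 * a + 1) * c + 2)"
  proof -
    have "(\<Sum>k<K. h k) = (\<Sum>k\<in>{k\<in>{..<K}. real k < 2 * a}. c)"
      unfolding h_def by (rule sum.inter_filter[symmetric]) simp
    also have "\<dots> \<le> (\<Sum>k<nat \<lceil>2 * a\<rceil>. c)"
      using \<open>c \<ge> 0\<close> by (intro sum_mono2) (auto simp: zless_nat_eq_int_zless less_ceiling_iff)
    also have "\<dots> = real (nat \<lceil>2 * a\<rceil>) * c"
      by simp
    also have "\<dots> \<le> (2 * a + 1) * c"
      using \<open>a \<ge> 0\<close> \<open>c \<ge> 0\<close> by (intro mult_right_mono) linarith+
    finally have "(\<Sum>k<K. h k) \<le> (2 * a + 1) * c" .
    moreover have "(\<Sum>k<K. (1 / 2 :: real) ^ k) \<le> 2"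
      using sum_le_suminf[OF summable_geometric[of "1 / 2 :: real"], of "{..<K}"]
      by (simp add: suminf_geometric)
    ultimately show ?thesis
      by simp
  qed
  also have "\<dots> \<le> exp (20 * (t\<^sup>2 + 1))"
  proof -
    have "pi * a \<le> 4 * a"
      using pi_less_4 \<open>a \<ge> 0\<close> by (intro mult_right_mono) auto
    then have "(2 * a + 1) * c \<le> (2 * a + 1) * (1 + 8 * a)"
      using \<open>a \<ge> 0\<close> unfolding c_def by (intro mult_left_mono) auto
    moreover have "(2 * a + 1) * (1 + 8 * a) + 2 \<le> 20 * (a\<^sup>2 + 1)"
      using sum_power2_ge_zero[of "2 * a - 5 / 2" 0] by (simp add: power2_eq_square algebra_simps)
    ultimately show ?thesis
      by (simp add: a_def)
  qed
  finally show ?thesis .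
qed

definition row_exp :: "real \<Rightarrow> nat \<Rightarrow> complex \<Rightarrow> complex" where
  "row_exp \<mu> k w = exp (2 * pi * \<i> * (w - of_real \<mu> + \<i> * of_nat k))"

definition row_product :: "(nat \<Rightarrow> real) \<Rightarrow> complex \<Rightarrow> complex" where
  "row_product \<mu> w = (\<Prod>k. 1 - row_exp (\<mu> k) k w)"

lemma norm_row_exp: "norm (row_exp \<mu> k w) = exp (2 * pi * (- Im w - real k))"
  by (simp add: row_exp_def algebra_simps)

lemma row_exp_holomorphic: "row_exp \<mu> k holomorphic_on A"
  unfolding row_exp_def by (intro holomorphic_intros)

lemma norm_row_exp_le:
  assumes "norm w \<le> R"
  shows "norm (row_exp \<mu> k w) \<le> exp (2 * pi * R) * exp (- 2 * pi) ^ k"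
proof -
  have "- Im w \<le> R"
    using assms abs_Im_le_cmod[of w] by linarith
  then have "exp (2 * pi * (- Im w - real k)) \<le> exp (2 * pi * (R - real k))"
    by simp
  also have "\<dots> = exp (2 * pi * R) * exp (- 2 * pi) ^ k"
    by (simp add: exp_of_nat_mult[symmetric] exp_add[symmetric] algebra_simps)
  finally show ?thesis
    by (simp add: norm_row_exp)
qed

lemma summable_row_exp_bound: "summable (\<lambda>k. exp (2 * pi * R) * exp (- 2 * pi) ^ k)"
  by (intro summable_mult summable_geometric) simp

lemma convergent_prod_row: "convergent_prod (\<lambda>k. 1 - row_exp (\<mu> k) k w)"
proof (rule convergent_prod_one_minus)
  show "summable (\<lambda>k. norm (row_exp (\<mu> k) k w))"
    by (rule summable_comparison_test'[OF summable_row_exp_bound[of "norm w"]])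
      (use norm_row_exp_le[of w "norm w"] in simp)
qed

lemma entire_row_product: "row_product \<mu> holomorphic_on UNIV"
  unfolding row_product_def
proof (rule holomorphic_on_prodinf_one_minus)
  show "\<exists>M. summable M \<and> (\<forall>k. \<forall>w\<in>cball 0 R. norm (row_exp (\<mu> k) k w) \<le> M k)" for R
    using norm_row_exp_le summable_row_exp_bound by (metis mem_cball_0)
qed (rule row_exp_holomorphic)

lemma row_product_holomorphic [holomorphic_intros]:
  assumes "f holomorphic_on A"
  shows "(\<lambda>z. row_product \<mu> (f z)) holomorphic_on A"
  using holomorphic_on_compose_gen[OF assms entire_row_product] by (simp add: comp_def)

lemma row_product_eq_0: "row_product \<mu> (of_int n + of_real (\<mu> k) - \<i> * of_nat k) = 0"
proof -
  have "row_exp (\<mu> k) k (of_int n + of_real (\<mu> k) - \<i> * of_nat k) = exp ((2 * of_int n * pi) * \<i>)"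
    by (simp add: row_exp_def algebra_simps)
  also have "\<dots> = 1"
    by (rule exp_integer_2pi) simp
  finally show ?thesis
    unfolding row_product_def
    using has_prod_eq_0_iff[OF convergent_prod_has_prod[OF convergent_prod_row]] by force
qed

lemma row_product_nonzero:
  assumes "Im w > 0"
  shows "row_product \<mu> w \<noteq> 0"
  unfolding row_product_def
proof (rule prodinf_nonzero[OF convergent_prod_row])
  have "norm (row_exp (\<mu> k) k w) < 1" for k
    using assms by (simp add: norm_row_exp mult_pos_neg)
  then show "1 - row_exp (\<mu> k) k w \<noteq> 0" for k
    by (metis norm_one order_less_irrefl right_minus_eq)
qed

lemma norm_row_product_le: "norm (row_product \<mu> w) \<le> exp (20 * ((Im w)\<^sup>2 + 1))"
proof (rule LIMSEQ_le_const2)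
  show "(\<lambda>n. norm (\<Prod>k\<le>n. 1 - row_exp (\<mu> k) k w)) \<longlonglongrightarrow> norm (row_product \<mu> w)"
    unfolding row_product_def by (intro tendsto_norm convergent_prod_LIMSEQ convergent_prod_row)
  show "\<exists>N. \<forall>n\<ge>N. norm (\<Prod>k\<le>n. 1 - row_exp (\<mu> k) k w) \<le> exp (20 * ((Im w)\<^sup>2 + 1))"
  proof (intro exI allI impI)
    fix n
    have "norm (\<Prod>k\<le>n. 1 - row_exp (\<mu> k) k w) = (\<Prod>k<Suc n. norm (1 - row_exp (\<mu> k) k w))"
      by (simp add: prod_norm lessThan_Suc_atMost)
    also have "\<dots> \<le> (\<Prod>k<Suc n. 1 + exp (2 * pi * (- Im w - real k)))"
    proof (intro prod_mono conjI)
      fix k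
      show "norm (1 - row_exp (\<mu> k) k w) \<le> 1 + exp (2 * pi * (- Im w - real k))"
        using norm_triangle_ineq4[of 1 "row_exp (\<mu> k) k w"] by (simp add: norm_row_exp)
    qed simp
    also have "\<dots> \<le> exp (20 * ((- Im w)\<^sup>2 + 1))"
      by (rule prod_one_plus_exp_two_pi_le)
    finally show "norm (\<Prod>k\<le>n. 1 - row_exp (\<mu> k) k w) \<le> exp (20 * ((Im w)\<^sup>2 + 1))"
      by simp
  qed
qed

lemma lattice_point_on_row:
  fixes lam :: "int \<Rightarrow> real" and m n :: int
  obtains k where "Complex (of_int n + lam m) (of_int m) = of_int n + of_real (lam (- int k)) - \<i> * of_nat k"
    | k where "\<i> - Complex (of_int n + lam m) (of_int m)
                 = of_int (- n) + of_real (- lam (int k + 1)) - \<i> * of_nat k"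
proof (cases "m \<le> 0")
  case True
  then show ?thesis
    using that(1)[of "nat (- m)"] by (simp add: complex_eq_iff)
next
  case False
  then show ?thesis
    using that(2)[of "nat (m - 1)"] by (simp add: complex_eq_iff)
qed

(* The first factor carries the rows m >= 1, reflected by z |-> i - z into the lower half-plane. *)
definition lattice_product :: "(int \<Rightarrow> real) \<Rightarrow> complex \<Rightarrow> complex" where
  "lattice_product lam z =
     row_product (\<lambda>k. - lam (int k + 1)) (\<i> - z) * row_product (\<lambda>k. lam (- int k)) z"

lemma lattice_product_holomorphic: "lattice_product lam holomorphic_on UNIV"
  unfolding lattice_product_def by (intro holomorphic_intros)

lemma lattice_product_nonzero: "lattice_product lam (\<i> / 2) \<noteq> 0"
  unfolding lattice_product_def by (simp add: row_product_nonzero)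

lemma lattice_product_eq_0: "lattice_product lam (Complex (of_int n + lam m) (of_int m)) = 0"
proof (cases rule: lattice_point_on_row[of n lam m])
  case (1 k)
  have "row_product (\<lambda>k. lam (- int k)) (Complex (of_int n + lam m) (of_int m)) = 0"
    unfolding 1 by (rule row_product_eq_0[of "\<lambda>k. lam (- int k)"])
  then show ?thesis
    by (simp add: lattice_product_def)
next
  case (2 k)
  have "row_product (\<lambda>k. - lam (int k + 1)) (\<i> - Complex (of_int n + lam m) (of_int m)) = 0"
    unfolding 2 by (rule row_product_eq_0[of "\<lambda>k. - lam (int k + 1)"])
  then show ?thesis
    by (simp add: lattice_product_def)
qed

lemma norm_lattice_product_le: "norm (lattice_product lam z) \<le> exp (60 * (norm z)\<^sup>2 + 80)"
proof -
  have "norm (row_product (\<lambda>k. - lam (int k + 1)) (\<i> - z)) \<le> exp (20 * ((1 - Im z)\<^sup>2 + 1))"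
    using norm_row_product_le[of _ "\<i> - z"] by simp
  moreover have "norm (row_product (\<lambda>k. lam (- int k)) z) \<le> exp (20 * ((Im z)\<^sup>2 + 1))"
    by (rule norm_row_product_le)
  ultimately have "norm (lattice_product lam z)
                     \<le> exp (20 * ((1 - Im z)\<^sup>2 + 1)) * exp (20 * ((Im z)\<^sup>2 + 1))"
    unfolding lattice_product_def norm_mult by (intro mult_mono) auto
  also have "\<dots> \<le> exp (60 * (Im z)\<^sup>2 + 80)"
    using sum_power2_ge_zero[of "Im z + 1" 0]
    by (simp add: exp_add[symmetric] power2_eq_square algebra_simps)
  also have "\<dots> \<le> exp (60 * (norm z)\<^sup>2 + 80)"
    using power_mono[OF abs_Im_le_cmod[of z], of 2] by simp
  finally show ?thesis .
qed

theorem proposition6: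
  fixes lam :: "int \<Rightarrow> real"
  assumes "\<And>m. 0 \<le> lam m \<and> lam m < 1"
  shows "\<exists>P :: complex \<Rightarrow> complex. \<exists>c :: real.
           P holomorphic_on UNIV \<and> (\<exists>z. P z \<noteq> 0) \<and>
           (\<forall>m n :: int. P (Complex (of_int n + lam m) (of_int m)) = 0) \<and>
           c > 0 \<and> (\<forall>z. norm (P z) \<le> exp (c * (norm z)^2))"
proof -
  \<comment> \<open>The construction works for arbitrary real shifts.\<close>
  define P where "P z = of_real (exp (- 80)) * lattice_product lam z" for z
  have "P holomorphic_on UNIV"
    unfolding P_def by (intro holomorphic_intros lattice_product_holomorphic)
  moreover have "P (\<i> / 2) \<noteq> 0"
    by (simp add: P_def lattice_product_nonzero)
  moreover have "P (Complex (of_int n + lam m) (of_int m)) = 0" for m n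
    by (simp add: P_def lattice_product_eq_0)
  moreover have "norm (P z) \<le> exp (60 * (norm z)\<^sup>2)" for z
  proof -
    have "norm (P z) \<le> exp (- 80) * exp (60 * (norm z)\<^sup>2 + 80)"
      by (simp add: P_def norm_mult norm_lattice_product_le)
    then show ?thesis
      by (simp add: exp_add[symmetric])
  qed
  ultimately show ?thesis
    by (intro exI[of _ P] exI[of _ 60]) auto
qed

end
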